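(* Consider an EF neuron as in the context, and suppose it receives no input spike after the end of its input time window, i.e. $\mathcal F_i^{in}\subseteq\{0,\ldots,T^{in}-1\}$ for all $i\in\Gamma$. Let $x=\max(V_m^-(T^{in}-1),0)$ and let $S\subseteq\{0,\ldots,T^{out}-1\}$ be the set of spike times of the LTC spike train of $x$ with the output exponent range $\{e^{out}_{min},\ldots,e^{out}_{max}\}$, where multi-spike LTC is used if the neuron is a multi-spike EF neuron and single-spike LTC is used if it is a single-spike EF neuron. Then the output spikes of the neuron within its output time window are exactly the shifted LTC spikes: $\mathcal F^{out}\cap\{T^{in}-1,\ldots,T^{in}+T^{out}-2\}=\{T^{in}-1+s : s\in S\}$.
   Context: Exponentiate-and-Fire (EF) neuron (discrete time $t\in\mathbb Z$). Fix integers $e^{in}_{min}\le e^{in}_{max}$ (input exponent range), $T^{in}=e^{in}_{max}-e^{in}_{min}+1$ (input time window $\{0,\ldots,T^{in}-1\}$), and integers $e^{out}_{min}\le e^{out}_{max}$ (output exponent range), $T^{out}=e^{out}_{max}-e^{out}_{min}+1$. The output time window is $\{T^{in}-1,\ldots,T^{in}+T^{out}-2\}$. The firing threshold is $V_{th}=2^{e^{out}_{max}}$. The neuron has a finite set $\Gamma$ of synapses with real weights $w_i$, and for each $i\in\Gamma$ a finite set $\mathcal F_i^{in}\subseteq\{0,1,2,\ldots\}$ of input spike times. PSP kernel: $\epsilon(s)=2^{e^{in}_{min}}\cdot 2^{s}\cdot\mathbb 1(s\ge 0)$; total PSP $h_i(t)=\sum_{t^{in}\in\mathcal F_i^{in}}\epsilon(t-t^{in})$.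 With $\mathcal F^{out}\subseteq\mathbb Z$ the set of output spike times and $\eta$ the afterhyperpolarizing kernel, the membrane potential is $V_m(t)=\sum_{i\in\Gamma}w_i h_i(t)+\sum_{t^{out}\in\mathcal F^{out}}\eta(t-t^{out})\,\mathbb 1(t\ge t^{out})$ and the pre-reset membrane potential is $V_m^-(t)=V_m(t)-\eta(0)\,\mathbb 1(t\in\mathcal F^{out})$ (which depends only on output spikes at times $<t$). Output spikes are generated recursively in time: $t\in\mathcal F^{out}$ if and only if $V_m^-(t)\ge V_{th}$ (so no output spikes occur at negative times, where $V_m^-=0$). For a multi-spike EF neuron, the output spike at $t^{out}$ contributes $\eta(s)=-V_{th}\cdot 2^{s}$ (reset by subtraction); for a single-spike EF neuron it contributes $\eta(s)=-V_m^-(t^{out})\cdot 2^{s}$ (reset to zero). Logarithmic approximation and LTC, for integers $e_{min}\le e_{max}$ and real $a$: the multi-power LA is $\tilde a=0$ if $a<2^{e_{min}}$, $\tilde a=\lfloor a/2^{e_{min}}\rfloor 2^{e_{min}}$ if $2^{e_{min}}\le a<2^{e_{max}+1}$, $\tilde a=2^{e_{max}+1}-2^{e_{min}}$ if $a\ge 2^{e_{max}+1}$. The single-power LA is $\tilde a=0$ if $a<2^{e_{min}}$, $\tilde a=2^{\lfloor\log_2 a\rfloor}$ if $2^{e_{min}}\le a<2^{e_{max}+1}$, $\tilde a=2^{e_{max}}$ if $a\ge 2^{e_{max}+1}$. Writing $\tilde a=\sum_{e\in E}2^e$ with distinct $E\subseteq\{e_{min},\ldots,e_{max}\}$, the LTC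 spike train of $a$ is the set of spike times $\{e_{max}-e: e\in E\}\subseteq\{0,\ldots,e_{max}-e_{min}\}$; it is called multi-spike LTC when multi-power LA is used and single-spike LTC when single-power LA is used. *)

theory Defs
  imports Complex_Main
begin

text \<open>Kind of EF neuron: multi-spike (reset by subtraction) or single-spike (reset to zero).\<close>
datatype ef_kind = MultiSpike | SingleSpike

definition psp :: "int \<Rightarrow> int \<Rightarrow> real" where
  "psp ein_min s = (if s \<ge> 0 then (2::real) powi ein_min * (2::real) powi s else 0)"

definition total_psp :: "int \<Rightarrow> nat set \<Rightarrow> int \<Rightarrow> real" where
  "total_psp ein_min Fin t = (\<Sum>tin\<in>Fin. psp ein_min (t - int tin))"

definition syn_input :: "int \<Rightarrow> 'a set \<Rightarrow> ('a \<Rightarrow> real) \<Rightarrow> ('a \<Rightarrow> nat set) \<Rightarrow> int \<Rightarrow> real" where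
  "syn_input ein_min G w Fin t = (\<Sum>i\<in>G. w i * total_psp ein_min (Fin i) t)"

text \<open>Reset amplitude: the AHP kernel of an output spike at t_out is
  eta(s) = - reset_amp * 2^s, with reset_amp = V_th (multi-spike) or V_m^-(t_out) (single-spike).\<close>
definition reset_amp :: "ef_kind \<Rightarrow> real \<Rightarrow> real \<Rightarrow> real" where
  "reset_amp k Vth v = (case k of MultiSpike \<Rightarrow> Vth | SingleSpike \<Rightarrow> v)"

text \<open>Pre-reset membrane potential V_m^-(t) at nonnegative times t (as a natural number),
  defined by recursion over time: an output spike occurs at u iff V_m^-(u) >= V_th,
  and contributes eta(t - u) for t > u.\<close>
function vpre :: "ef_kind \<Rightarrow> real \<Rightarrow> int \<Rightarrow> 'a set \<Rightarrow> ('a \<Rightarrow> real) \<Rightarrow> ('a \<Rightarrow> nat set) \<Rightarrow> nat \<Rightarrow> real" where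
  "vpre k Vth ein_min G w Fin t =
     syn_input ein_min G w Fin (int t)
     + (\<Sum>u\<in>{..<t}. (if Vth \<le> vpre k Vth ein_min G w Fin u
                     then - reset_amp k Vth (vpre k Vth ein_min G w Fin u) * (2::real) ^ (t - u)
                     else 0))"
  by auto
termination
  by (relation "measure (\<lambda>(k, Vth, ein_min, G, w, Fin, t). t)") auto

definition Vm_pre :: "ef_kind \<Rightarrow> int \<Rightarrow> int \<Rightarrow> 'a set \<Rightarrow> ('a \<Rightarrow> real) \<Rightarrow> ('a \<Rightarrow> nat set) \<Rightarrow> int \<Rightarrow> real" where
  "Vm_pre k ein_min eout_max G w Fin t =
     (if t < 0 then 0 else vpre k ((2::real) powi eout_max) ein_min G w Fin (nat t))"

definition out_spikes :: "ef_kind \<Rightarrow> int \<Rightarrow> int \<Rightarrow> 'a set \<Rightarrow> ('a \<Rightarrow> real) \<Rightarrow> ('a \<Rightarrow> nat set) \<Rightarrow> int set" where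
  "out_spikes k ein_min eout_max G w Fin =
     {t. (2::real) powi eout_max \<le> Vm_pre k ein_min eout_max G w Fin t}"

definition la_multi :: "int \<Rightarrow> int \<Rightarrow> real \<Rightarrow> real" where
  "la_multi emin emax a =
     (if a < 2 powi emin then 0
      else if a < 2 powi (emax + 1) then of_int \<lfloor>a / 2 powi emin\<rfloor> * 2 powi emin
      else 2 powi (emax + 1) - 2 powi emin)"

definition la_single :: "int \<Rightarrow> int \<Rightarrow> real \<Rightarrow> real" where
  "la_single emin emax a =
     (if a < 2 powi emin then 0
      else if a < 2 powi (emax + 1) then 2 powi \<lfloor>log 2 a\<rfloor>
      else 2 powi emax)"

definition la :: "ef_kind \<Rightarrow> int \<Rightarrow> int \<Rightarrow> real \<Rightarrow> real" where
  "la k emin emax a = (case k of MultiSpike \<Rightarrow> la_multi emin emax a | SingleSpike \<Rightarrow> la_single emin emax a)"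

definition la_exps :: "ef_kind \<Rightarrow> int \<Rightarrow> int \<Rightarrow> real \<Rightarrow> int set" where
  "la_exps k emin emax a =
     (THE E. E \<subseteq> {emin..emax} \<and> la k emin emax a = (\<Sum>e\<in>E. (2::real) powi e))"

definition ltc :: "ef_kind \<Rightarrow> int \<Rightarrow> int \<Rightarrow> real \<Rightarrow> int set" where
  "ltc k emin emax a = (\<lambda>e. emax - e) ` la_exps k emin emax a"

end

theory Submission
  imports Defs
begin

text \<open>Once the last input spike has arrived, the synaptic input and every earlier reset term
  double from one time step to the next, so the pre-reset potential evolves autonomously by
  \<open>v \<mapsto> 2 v - 2 r\<close> when \<open>v \<ge> V_th\<close> and \<open>v \<mapsto> 2 v\<close> otherwise, \<open>r\<close> being the reset amplitude.
  With reset by subtraction this map extracts the binary digits of \<open>x / V_th\<close> greedily: the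
  spikes in the first \<open>m + 1\<close> steps are the binary digits of \<open>\<lfloor>x 2^m / V_th\<rfloor>\<close> (all of them
  once \<open>x \<ge> 2 V_th\<close>, none for negative \<open>x\<close>), which is the multi-power approximation. With reset
  to zero the neuron fires only once, at the first step \<open>j\<close> with \<open>2^j x \<ge> V_th\<close>, i.e. at
  \<open>e_max - \<lfloor>log\<^sub>2 x\<rfloor>\<close>, which is the single-power approximation. Uniqueness of binary
  expansions identifies these spike times with the LTC spike train.\<close>

declare vpre.simps[simp del]

lemma sum_powi_two_atLeastLessThan:
  "a \<le> b \<Longrightarrow> (\<Sum>e\<in>{a..<b}. (2::real) powi e) = 2 powi b - 2 powi a"
proof (induction b rule: int_ge_induct)
  case (step b)
  have "{a..<b + 1} = insert b {a..<b}" using step.hyps by auto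
  then show ?case using step.IH by (simp add: power_int_add_1)
qed simp

lemma sum_powi_two_less:
  assumes "finite E" and "\<forall>e\<in>E. e < t"
  shows "(\<Sum>e\<in>E. (2::real) powi e) < 2 powi t"
proof (cases "E = {}")
  case False
  let ?a = "Min E"
  have "?a \<le> t" using assms False by (simp add: order_less_imp_le)
  have "(\<Sum>e\<in>E. (2::real) powi e) \<le> (\<Sum>e\<in>{?a..<t}. 2 powi e)"
    using assms by (intro sum_mono2) auto
  also have "\<dots> < 2 powi t" using \<open>?a \<le> t\<close> by (simp add: sum_powi_two_atLeastLessThan)
  finally show ?thesis .
qed simp

text \<open>Uniqueness of binary expansions: the largest exponent in the symmetric difference
  outweighs all the smaller ones on the other side.\<close>
lemma sum_powi_two_inj:
  assumes "finite E" and "finite E'"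
    and "(\<Sum>e\<in>E. (2::real) powi e) = (\<Sum>e\<in>E'. 2 powi e)"
  shows "E = E'"
proof (rule ccontr)
  assume "E \<noteq> E'"
  let ?D = "(E - E') \<union> (E' - E)"
  define t where "t = Max ?D"
  have "?D \<noteq> {}" using \<open>E \<noteq> E'\<close> by blast
  have "finite ?D" using assms(1,2) by simp
  have t: "t \<in> ?D" unfolding t_def using \<open>finite ?D\<close> \<open>?D \<noteq> {}\<close> by (rule Max_in)
  have below: "\<forall>e\<in>?D - {t}. e < t"
    unfolding t_def using Max_ge[OF \<open>finite ?D\<close>] by (simp add: less_le)
  have diff_eq: "(\<Sum>e\<in>E - E'. (2::real) powi e) = (\<Sum>e\<in>E' - E. 2 powi e)"
    using assms sum.Int_Diff[of E "\<lambda>e. (2::real) powi e" E'] sum.Int_Diff[of E' "\<lambda>e. (2::real) powi e" E]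
    by (simp add: Int_commute)
  have dominates: "(\<Sum>e\<in>B. (2::real) powi e) < (\<Sum>e\<in>A. 2 powi e)"
    if "A \<subseteq> ?D" "B \<subseteq> ?D" "t \<in> A" "t \<notin> B" for A B
  proof -
    have "finite A" "finite B" using that(1,2) assms(1,2) by (auto intro: finite_subset)
    have "(\<Sum>e\<in>B. (2::real) powi e) < 2 powi t"
      using \<open>finite B\<close> below that(2,4) by (intro sum_powi_two_less) auto
    also have "\<dots> \<le> (\<Sum>e\<in>A. 2 powi e)"
      using \<open>finite A\<close> that(3) by (intro member_le_sum) auto
    finally show ?thesis .
  qed
  show False
    using t dominates[of "E - E'" "E' - E"] dominates[of "E' - E" "E - E'"] diff_eq by auto
qed

lemma powi_two_diff_nat: "(2::real) powi (e - int j) = 2 powi e / 2 ^ j"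
  by (simp add: power_int_diff)

lemma la_exps_eqI:
  assumes "E \<subseteq> {emin..emax}" and "la k emin emax a = (\<Sum>e\<in>E. (2::real) powi e)"
  shows "la_exps k emin emax a = E"
  unfolding la_exps_def
proof (rule the_equality)
  fix E' assume "E' \<subseteq> {emin..emax} \<and> la k emin emax a = (\<Sum>e\<in>E'. (2::real) powi e)"
  then show "E' = E"
    using assms by (intro sum_powi_two_inj) (auto intro: finite_subset)
qed (use assms in simp)

lemma psp_Suc: "0 \<le> s \<Longrightarrow> psp e (s + 1) = 2 * psp e s"
  by (simp add: psp_def power_int_add_1)

lemma syn_input_double:
  assumes "\<forall>i\<in>G. \<forall>tin\<in>Fin i. int tin \<le> t"
  shows "syn_input e G w Fin (t + 1) = 2 * syn_input e G w Fin t"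
  unfolding syn_input_def total_psp_def sum_distrib_left
proof (intro sum.cong refl)
  fix i tin assume "i \<in> G" "tin \<in> Fin i"
  then have "0 \<le> t - int tin" using assms by auto
  then show "w i * psp e (t + 1 - int tin) = 2 * (w i * psp e (t - int tin))"
    using psp_Suc[of "t - int tin" e] by (simp add: algebra_simps)
qed

definition ef_step :: "ef_kind \<Rightarrow> real \<Rightarrow> real \<Rightarrow> real" where
  "ef_step k c v = 2 * v - (if c \<le> v then 2 * reset_amp k c v else 0)"

lemma vpre_Suc_after_input:
  assumes "\<forall>i\<in>G. \<forall>tin\<in>Fin i. tin \<le> t"
  shows "vpre k c e G w Fin (Suc t) = ef_step k c (vpre k c e G w Fin t)"
proof -
  let ?V = "vpre k c e G w Fin"
  let ?reset = "\<lambda>t u. if c \<le> ?V u then - reset_amp k c (?V u) * (2::real) ^ (t - u) else 0"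
  have resets: "(\<Sum>u<t. ?reset (Suc t) u) = 2 * (\<Sum>u<t. ?reset t u)"
    unfolding sum_distrib_left by (intro sum.cong refl) (simp add: Suc_diff_le)
  have "\<forall>i\<in>G. \<forall>tin\<in>Fin i. int tin \<le> int t" using assms by simp
  from syn_input_double[OF this, of e w]
  have syn: "syn_input e G w Fin (int (Suc t)) = 2 * syn_input e G w Fin (int t)"
    by (simp add: add.commute)
  have "?V (Suc t) = syn_input e G w Fin (int (Suc t)) + (\<Sum>u<Suc t. ?reset (Suc t) u)"
    by (subst vpre.simps) simp
  also have "\<dots> = 2 * (syn_input e G w Fin (int t) + (\<Sum>u<t. ?reset t u)) + ?reset (Suc t) t"
    unfolding syn sum.lessThan_Suc resets by (simp add: algebra_simps)
  also have "syn_input e G w Fin (int t) + (\<Sum>u<t. ?reset t u) = ?V t"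
    by (subst (2) vpre.simps) simp
  finally show ?thesis by (simp add: ef_step_def)
qed

lemma vpre_after_input:
  assumes "\<forall>i\<in>G. \<forall>tin\<in>Fin i. tin \<le> n"
  shows "vpre k c e G w Fin (n + j) = (ef_step k c ^^ j) (vpre k c e G w Fin n)"
proof (induction j)
  case (Suc j)
  have "\<forall>i\<in>G. \<forall>tin\<in>Fin i. tin \<le> n + j" using assms by fastforce
  then show ?case using Suc by (simp add: vpre_Suc_after_input)
qed simp

lemma out_spikes_after_input:
  assumes "\<forall>i\<in>G. \<forall>tin\<in>Fin i. tin \<le> n"
  shows "int n + int j \<in> out_spikes k e emax G w Fin \<longleftrightarrow>
           2 powi emax \<le> (ef_step k (2 powi emax) ^^ j) (Vm_pre k e emax G w Fin (int n))"
proof -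
  have "Vm_pre k e emax G w Fin (int n + int j) = vpre k (2 powi emax) e G w Fin (n + j)"
    unfolding Vm_pre_def by (simp add: nat_int_add)
  also have "\<dots> = (ef_step k (2 powi emax) ^^ j) (vpre k (2 powi emax) e G w Fin n)"
    by (rule vpre_after_input[OF assms])
  also have "vpre k (2 powi emax) e G w Fin n = Vm_pre k e emax G w Fin (int n)"
    by (simp add: Vm_pre_def)
  finally show ?thesis by (simp add: out_spikes_def)
qed

lemma out_spikes_window_after_input:
  assumes "\<forall>i\<in>G. \<forall>tin\<in>Fin i. tin \<le> n"
  shows "out_spikes k e emax G w Fin \<inter> {int n..int n + int m} =
           (\<lambda>j. int n + int j) `
             {j. j \<le> m \<and> 2 powi emax \<le> (ef_step k (2 powi emax) ^^ j) (Vm_pre k e emax G w Fin (int n))}"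
proof -
  have "{int n..int n + int m} = (\<lambda>j. int n + int j) ` {..m}"
    by (auto simp: image_iff intro!: bexI[where x = "nat (_ - int n)"])
  then show ?thesis using out_spikes_after_input[OF assms] by auto
qed

abbreviation multi_step :: "real \<Rightarrow> real \<Rightarrow> real" where
  "multi_step \<equiv> ef_step MultiSpike"

lemma multi_step_eq: "multi_step c v = 2 * v - (if c \<le> v then 2 * c else 0)"
  by (simp add: ef_step_def reset_amp_def)

lemma multi_step_closed_form:
  "(multi_step c ^^ j) x =
     2 ^ j * (x - (\<Sum>i<j. if c \<le> (multi_step c ^^ i) x then c / 2 ^ i else 0))"
  by (induction j) (auto simp: multi_step_eq field_simps)

lemma multi_step_bounded:
  assumes "0 \<le> x" "x < 2 * c"
  shows "0 \<le> (multi_step c ^^ j) x \<and> (multi_step c ^^ j) x < 2 * c"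
  by (induction j) (use assms in \<open>auto simp: multi_step_eq\<close>)

lemma multi_step_saturated:
  assumes "0 < c" "2 * c \<le> x"
  shows "2 * c \<le> (multi_step c ^^ j) x"
  by (induction j) (use assms in \<open>auto simp: multi_step_eq\<close>)

lemma multi_step_negative:
  assumes "0 < c" "x < 0"
  shows "(multi_step c ^^ j) x < 0"
  by (induction j) (use assms in \<open>auto simp: multi_step_eq\<close>)

lemma multi_step_spike_sum:
  assumes "0 \<le> x" "x < 2 * c"
  shows "(\<Sum>j | j \<le> m \<and> c \<le> (multi_step c ^^ j) x. c / 2 ^ j) = \<lfloor>x / (c / 2 ^ m)\<rfloor> * (c / 2 ^ m)"
proof -
  let ?spike = "\<lambda>i. c \<le> (multi_step c ^^ i) x"
  define d where "d = c / 2 ^ m"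
  define N :: nat where "N = (\<Sum>i<Suc m. if ?spike i then 2 ^ (m - i) else 0)"
  have "0 < d" using assms by (simp add: d_def)
  have N: "(\<Sum>i<Suc m. if ?spike i then c / 2 ^ i else 0) = N * d"
    unfolding N_def d_def of_nat_sum sum_distrib_right
  proof (intro sum.cong refl)
    fix i assume "i \<in> {..<Suc m}"
    then have "(2::real) ^ m = 2 ^ (m - i) * 2 ^ i" by (simp flip: power_add)
    then show "(if ?spike i then c / 2 ^ i else 0) = real (if ?spike i then 2 ^ (m - i) else 0) * (c / 2 ^ m)"
      by simp
  qed
  have "(\<Sum>j | j \<le> m \<and> ?spike j. c / 2 ^ j) = (\<Sum>i<Suc m. if ?spike i then c / 2 ^ i else 0)"
    by (simp add: sum.If_cases lessThan_Suc_atMost Collect_conj_eq Int_commute atMost_def)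
  with N have sum_eq: "(\<Sum>j | j \<le> m \<and> ?spike j. c / 2 ^ j) = N * d" by simp
  define y where "y = (multi_step c ^^ Suc m) x"
  have "0 \<le> y" "y < 2 * c" using multi_step_bounded[OF assms, of "Suc m"] unfolding y_def by simp_all
  moreover have "x - N * d = y / 2 ^ Suc m"
    using multi_step_closed_form[where j = "Suc m"] N by (simp add: y_def)
  ultimately have "0 \<le> x - N * d" "x - N * d < d"
    by (simp_all add: d_def divide_simps)
  then have "0 \<le> x / d - N" "x / d - N < 1"
    using \<open>0 < d\<close> by (simp_all add: field_simps)
  then have "\<lfloor>x / d\<rfloor> = N" by linarith
  then show ?thesis using sum_eq by (simp add: d_def)
qed

lemma la_multi_spike_sum:
  assumes c: "c = 2 powi emax"
  shows "la_multi (emax - int m) emax (max x 0) =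
           (\<Sum>j | j \<le> m \<and> c \<le> (multi_step c ^^ j) x. 2 powi (emax - int j))"
proof -
  let ?S = "{j. j \<le> m \<and> c \<le> (multi_step c ^^ j) x}"
  define d where "d = c / 2 ^ m"
  have "0 < c" "0 < d" by (simp_all add: c d_def)
  have lo: "(2::real) powi (emax - int m) = d" and hi: "(2::real) powi (emax + 1) = 2 * c"
    by (simp_all add: c d_def powi_two_diff_nat power_int_add_1)
  have sum_eq: "(\<Sum>j\<in>?S. (2::real) powi (emax - int j)) = (\<Sum>j\<in>?S. c / 2 ^ j)"
    by (simp add: c powi_two_diff_nat)
  consider "x < 0" | "0 \<le> x" "x < 2 * c" | "2 * c \<le> x" by linarith
  then show ?thesis
  proof cases
    case 1
    have "\<not> c \<le> (multi_step c ^^ j) x" for j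
      using multi_step_negative[OF \<open>0 < c\<close> 1, of j] \<open>0 < c\<close> by linarith
    then have "?S = {}" by blast
    show ?thesis unfolding \<open>?S = {}\<close> using 1 \<open>0 < d\<close> by (simp add: la_multi_def lo)
  next
    case 2
    have "\<lfloor>x / d\<rfloor> = 0" if "x < d" using 2 that \<open>0 < d\<close> by (simp add: floor_eq_iff)
    then show ?thesis
      using 2 multi_step_spike_sum[OF 2, of m] by (auto simp: la_multi_def lo hi sum_eq d_def)
  next
    case 3
    have "c \<le> (multi_step c ^^ j) x" for j
      using multi_step_saturated[OF \<open>0 < c\<close> 3, of j] \<open>0 < c\<close> by linarith
    then have "?S = {..m}" by blast
    have "{emax - int m..<emax + 1} = (\<lambda>j. emax - int j) ` {..m}"
      by (auto simp: image_iff intro!: bexI[where x = "nat (emax - _)"])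
    moreover have "inj_on (\<lambda>j. emax - int j) {..m}" by (simp add: inj_on_def)
    ultimately have "(\<Sum>j\<in>?S. (2::real) powi (emax - int j)) = 2 * c - d"
      using sum.reindex[of "\<lambda>j. emax - int j" "{..m}" "\<lambda>e. (2::real) powi e"]
        sum_powi_two_atLeastLessThan[of "emax - int m" "emax + 1"] \<open>?S = {..m}\<close>
      by (simp add: lo hi o_def)
    moreover have "d \<le> c" using \<open>0 < c\<close> by (simp add: d_def field_simps)
    ultimately show ?thesis using 3 \<open>0 < c\<close> by (simp add: la_multi_def lo hi)
  qed
qed

abbreviation single_step :: "real \<Rightarrow> real \<Rightarrow> real" where
  "single_step \<equiv> ef_step SingleSpike"

lemma single_step_below: "v < c \<Longrightarrow> single_step c v = 2 * v"
  by (simp add: ef_step_def)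

lemma single_step_at_spike: "c \<le> v \<Longrightarrow> single_step c v = 0"
  by (simp add: ef_step_def reset_amp_def)

lemma single_step_before_spike:
  "\<forall>i<j. 2 ^ i * x < c \<Longrightarrow> (single_step c ^^ j) x = 2 ^ j * x"
proof (induction j)
  case (Suc j)
  then have "(single_step c ^^ j) x = 2 ^ j * x" "2 ^ j * x < c" by simp_all
  then show ?case by (simp add: single_step_below)
qed simp

lemma single_step_after_spike:
  assumes "0 < c" "c \<le> (single_step c ^^ i) x" "i < j"
  shows "(single_step c ^^ j) x = 0"
  using assms(3)
proof (induction j)
  case (Suc j)
  then show ?case
    using assms(1,2) by (cases "i = j") (auto simp: single_step_at_spike single_step_below)
qed simp

lemma single_step_spike_iff:
  assumes "0 < c"
  shows "c \<le> (single_step c ^^ j) x \<longleftrightarrow> c \<le> 2 ^ j * x \<and> (\<forall>i<j. 2 ^ i * x < c)"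
proof (cases "\<forall>i<j. 2 ^ i * x < c")
  case True
  then show ?thesis by (simp add: single_step_before_spike)
next
  case False
  then obtain i where "i < j" "c \<le> 2 ^ i * x" "\<forall>i'<i. 2 ^ i' * x < c"
    using exists_least_iff[of "\<lambda>i. i < j \<and> c \<le> 2 ^ i * x"] by (auto simp: not_less not_le)
  then have "c \<le> (single_step c ^^ i) x" by (simp add: single_step_before_spike)
  then have "(single_step c ^^ j) x = 0" using single_step_after_spike assms \<open>i < j\<close> by blast
  then show ?thesis using False assms by simp
qed

lemma single_step_spikes_once:
  assumes "0 < c" "c \<le> 2 ^ j0 * x" "\<forall>i<j0. 2 ^ i * x < c"
  shows "{j. c \<le> (single_step c ^^ j) x} = {j0}"
proof -
  have "j = j0" if "c \<le> 2 ^ j * x" "\<forall>i<j. 2 ^ i * x < c" for j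
  proof (cases j j0 rule: linorder_cases)
    case less
    then show ?thesis using assms(3) that(1) by (meson not_le)
  next
    case greater
    then show ?thesis using assms(2) that(2) by (meson not_le)
  qed
  then show ?thesis using assms single_step_spike_iff[OF assms(1)] by blast
qed

lemma floor_log2_eq_iff:
  "0 < x \<Longrightarrow> \<lfloor>log 2 x\<rfloor> = L \<longleftrightarrow> 2 powi L \<le> x \<and> x < 2 powi (L + 1)"
  by (simp add: floor_log_eq_powr_iff powr_real_of_int' powr_add power_int_add_1)

lemma single_step_silent:
  assumes "0 < c" "x < c / 2 ^ m" "j \<le> m"
  shows "\<not> c \<le> (single_step c ^^ j) x"
proof -
  have "2 ^ j * x < c"
  proof (cases "x \<le> 0")
    case True
    then have "2 ^ j * x \<le> 0" by (intro mult_nonneg_nonpos) auto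
    then show ?thesis using \<open>0 < c\<close> by linarith
  next
    case False
    then have "2 ^ j * x \<le> 2 ^ m * x" using assms(3) by (simp add: mult_right_mono)
    also have "\<dots> < c" using assms(2) by (simp add: field_simps)
    finally show ?thesis .
  qed
  then show ?thesis using single_step_spike_iff[OF assms(1), of j x] by linarith
qed

lemma single_step_spikes_once_at_log:
  assumes c: "c = 2 powi emax" and "0 < x" and "\<lfloor>log 2 x\<rfloor> = emax - int j0"
  shows "{j. c \<le> (single_step c ^^ j) x} = {j0}"
proof -
  let ?L = "emax - int j0"
  have L: "2 powi ?L \<le> x" "x < 2 powi (?L + 1)"
    using floor_log2_eq_iff[OF \<open>0 < x\<close>] assms(3) by blast+
  have scale: "c = 2 ^ j0 * 2 powi ?L" by (simp add: c powi_two_diff_nat)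
  also have "\<dots> \<le> 2 ^ j0 * x" using L(1) by (intro mult_left_mono) auto
  finally have lower: "c \<le> 2 ^ j0 * x" .
  have "2 ^ j0 * x < 2 ^ j0 * 2 powi (?L + 1)" using L(2) by (intro mult_strict_left_mono) auto
  also have "\<dots> = 2 * c" by (simp add: scale power_int_add_1)
  finally have upper: "2 ^ j0 * x < 2 * c" .
  have "2 ^ i * x < c" if "i < j0" for i
  proof -
    have "2 ^ Suc i * x \<le> 2 ^ j0 * x"
      using that \<open>0 < x\<close> by (intro mult_right_mono power_increasing) auto
    then show ?thesis using upper by simp
  qed
  moreover have "0 < c" by (simp add: c)
  ultimately show ?thesis using single_step_spikes_once lower by blast
qed

lemma la_single_spike_sum:
  assumes c: "c = 2 powi emax"
  shows "la_single (emax - int m) emax (max x 0) =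
           (\<Sum>j | j \<le> m \<and> c \<le> (single_step c ^^ j) x. 2 powi (emax - int j))"
proof -
  let ?S = "{j. j \<le> m \<and> c \<le> (single_step c ^^ j) x}"
  define d where "d = c / 2 ^ m"
  have "0 < c" "0 < d" by (simp_all add: c d_def)
  have lo: "(2::real) powi (emax - int m) = d" and hi: "(2::real) powi (emax + 1) = 2 * c"
    by (simp_all add: c d_def powi_two_diff_nat power_int_add_1)
  consider "x < d" | "d \<le> x" "x < 2 * c" | "2 * c \<le> x" by linarith
  then show ?thesis
  proof cases
    case 1
    then have no_spike: "?S = {}" using single_step_silent[OF \<open>0 < c\<close>] by (auto simp: d_def)
    have "max x 0 < 2 powi (emax - int m)" using 1 \<open>0 < d\<close> lo by simp
    then have "la_single (emax - int m) emax (max x 0) = 0" unfolding la_single_def by (rule if_P)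
    then show ?thesis unfolding no_spike sum.empty .
  next
    case 2
    then have "0 < x" using \<open>0 < d\<close> by linarith
    define L where "L = \<lfloor>log 2 x\<rfloor>"
    have L: "2 powi L \<le> x" "x < 2 powi (L + 1)"
      using floor_log2_eq_iff[OF \<open>0 < x\<close>] L_def by blast+
    have "emax - int m \<le> L"
    proof (rule ccontr)
      assume "\<not> emax - int m \<le> L"
      then have "(2::real) powi (L + 1) \<le> 2 powi (emax - int m)" by (intro power_int_increasing) auto
      then show False using L(2) 2 lo by linarith
    qed
    moreover have "L \<le> emax"
    proof (rule ccontr)
      assume "\<not> L \<le> emax"
      then have "(2::real) powi (emax + 1) \<le> 2 powi L" by (intro power_int_increasing) auto
      then show False using L(1) 2 hi by linarith
    qed
    ultimately obtain j0 where "j0 \<le> m" and L_eq: "L = emax - int j0"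
      by (intro that[of "nat (emax - L)"]) auto
    have "\<lfloor>log 2 x\<rfloor> = emax - int j0" using L_def L_eq by simp
    from single_step_spikes_once_at_log[OF c \<open>0 < x\<close> this]
    have "?S = {j0}" using \<open>j0 \<le> m\<close> by auto
    moreover have "la_single (emax - int m) emax (max x 0) = 2 powi L"
      using 2 \<open>0 < x\<close> by (simp add: la_single_def lo hi flip: L_def)
    ultimately show ?thesis by (simp add: L_eq)
  next
    case 3
    then have "{j. c \<le> (single_step c ^^ j) x} = {0}"
      using \<open>0 < c\<close> by (intro single_step_spikes_once) auto
    then have spike_once: "?S = {0}" by auto
    have "d \<le> c" using \<open>0 < c\<close> by (simp add: d_def field_simps)
    then have "la_single (emax - int m) emax (max x 0) = 2 powi emax"
      using 3 \<open>0 < c\<close> by (simp add: la_single_def lo hi)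
    then show ?thesis unfolding spike_once by simp
  qed
qed

lemma la_spike_sum:
  assumes "c = 2 powi emax"
  shows "la k (emax - int m) emax (max x 0) =
           (\<Sum>j | j \<le> m \<and> c \<le> (ef_step k c ^^ j) x. 2 powi (emax - int j))"
  using la_multi_spike_sum[OF assms] la_single_spike_sum[OF assms] by (cases k) (simp_all add: la_def)

lemma ltc_eq_spike_times:
  assumes "c = 2 powi emax"
  shows "ltc k (emax - int m) emax (max x 0) = int ` {j. j \<le> m \<and> c \<le> (ef_step k c ^^ j) x}"
proof -
  let ?S = "{j. j \<le> m \<and> c \<le> (ef_step k c ^^ j) x}"
  let ?E = "(\<lambda>j. emax - int j) ` ?S"
  have "inj_on (\<lambda>j. emax - int j) ?S" by (simp add: inj_on_def)
  then have "la k (emax - int m) emax (max x 0) = (\<Sum>e\<in>?E. 2 powi e)"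
    using la_spike_sum[OF assms] by (simp add: sum.reindex)
  moreover have "?E \<subseteq> {emax - int m..emax}" by auto
  ultimately have "la_exps k (emax - int m) emax (max x 0) = ?E" by (intro la_exps_eqI)
  then show ?thesis by (simp add: ltc_def image_image)
qed

theorem lemma2:
  fixes k :: ef_kind
    and ein_min ein_max eout_min eout_max :: int
    and G :: "'a set" and w :: "'a \<Rightarrow> real" and Fin :: "'a \<Rightarrow> nat set"
  assumes "ein_min \<le> ein_max" and "eout_min \<le> eout_max"
    and "finite G"
    and "\<forall>i\<in>G. finite (Fin i)"
    and "\<forall>i\<in>G. \<forall>tin\<in>Fin i. int tin \<le> (ein_max - ein_min + 1) - 1"
  shows "out_spikes k ein_min eout_max G w Fin
           \<inter> {(ein_max - ein_min + 1) - 1 .. (ein_max - ein_min + 1) + (eout_max - eout_min + 1) - 2}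
         = (\<lambda>s. (ein_max - ein_min + 1) - 1 + s) `
             ltc k eout_min eout_max
               (max (Vm_pre k ein_min eout_max G w Fin ((ein_max - ein_min + 1) - 1)) 0)"
proof -
  define n where "n = nat (ein_max - ein_min)"
  define m where "m = nat (eout_max - eout_min)"
  have first: "ein_max - ein_min + 1 - 1 = int n" using assms(1) by (simp add: n_def)
  have last: "ein_max - ein_min + 1 + (eout_max - eout_min + 1) - 2 = int n + int m"
    using assms(1,2) by (simp add: n_def m_def)
  have eout_min: "eout_min = eout_max - int m" using assms(2) by (simp add: m_def)
  have inputs_done: "\<forall>i\<in>G. \<forall>tin\<in>Fin i. tin \<le> n" using assms(5) first by auto
  show ?thesis
    unfolding last first out_spikes_window_after_input[OF inputs_done] unfolding eout_min
    by (simp add: ltc_eq_spike_times image_image)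
qed

end
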